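(* There exists a sequence $(x_n)$ of positive reals with $\sum x_n<\infty$ such that the achievement set $E(x_n)$ is a Cantor set of Hausdorff dimension $0$ and the algebraic sum $E(x_n)+E(x_n)$ is also a Cantor set.
   Context: For a real sequence $(x_n)$, the achievement set is $E(x_n)=\{y\in\mathbb R:\exists A\subset\mathbb N,\ y=\sum_{n\in A}x_n\}$. A Cantor set is a set homeomorphic to the classical ternary Cantor set. For sets $A,B\subset\mathbb R$, $A+B=\{a+b:a\in A,b\in B\}$. *)

theory Defs
  imports "HOL-Analysis.Analysis"
begin

definition achievement_set :: "(nat \<Rightarrow> real) \<Rightarrow> real set" where
  "achievement_set x = {y. \<exists>A::nat set. y = (\<Sum>n. if n \<in> A then x n else 0)}"

definition ternary_cantor_set :: "real set" where
  "ternary_cantor_set = {y. \<exists>d::nat \<Rightarrow> nat. (\<forall>n. d n \<in> {0, 2}) \<and>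
                              y = (\<Sum>n. real (d n) / 3 ^ (Suc n))}"

definition is_cantor_set :: "real set \<Rightarrow> bool" where
  "is_cantor_set S \<longleftrightarrow> S homeomorphic ternary_cantor_set"

definition set_sum :: "real set \<Rightarrow> real set \<Rightarrow> real set" where
  "set_sum A B = {a + b | a b. a \<in> A \<and> b \<in> B}"

definition hausdorff_pre :: "real \<Rightarrow> real \<Rightarrow> real set \<Rightarrow> ennreal" where
  "hausdorff_pre s \<delta> A =
     (INF U \<in> {U :: nat \<Rightarrow> real set. A \<subseteq> (\<Union>i. U i) \<and> (\<forall>i. diameter (U i) \<le> \<delta>)}.
        (\<Sum>i. ennreal (diameter (U i) powr s)))"

definition hausdorff_measure :: "real \<Rightarrow> real set \<Rightarrow> ennreal" where
  "hausdorff_measure s A = (SUP \<delta> \<in> {0<..}. hausdorff_pre s \<delta> A)"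

definition hausdorff_dim :: "real set \<Rightarrow> ereal" where
  "hausdorff_dim A = (INF s \<in> {s::real. 0 \<le> s \<and> hausdorff_measure s A = 0}. ereal s)"

end

theory Submission
  imports Defs "HOL-Real_Asymp.Real_Asymp"
begin

(* Write reals as digit expansions \<Sum>n. d n * w n with digits d n \<in> {0..M}. If every
   weight exceeds M times the sum of all later weights, the expansion map is a continuous injection
   of the compact product space {0..M}^\<nat>, hence a homeomorphism onto its image. For
   x n = 4^(-n^2) this applies with M = 1 and M = 2: the achievement set E is the image of {0,1}^\<nat>
   and E + E that of {0,1,2}^\<nat>. The ternary Cantor set is the image of {0,1}^\<nat> under the
   weights 2 / 3^(n+1), and {0,1,2}^\<nat> is homeomorphic to {0,1}^\<nat> via the prefix code
   0 \<mapsto> 0, 1 \<mapsto> 10, 2 \<mapsto> 11. Finally, E is covered by the 2^N images of the cylinders of length N,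
   each of diameter at most (4/3) 4^(-N^2), and 2^N 4^(-s N^2) \<rightarrow> 0 for every s > 0, so E has
   Hausdorff dimension 0. *)

section \<open>Digit expansions\<close>

definition digit_seqs :: "nat \<Rightarrow> (nat \<Rightarrow> nat) set" where
  "digit_seqs M = {d. \<forall>n. d n \<le> M}"

definition digit_value :: "(nat \<Rightarrow> real) \<Rightarrow> (nat \<Rightarrow> nat) \<Rightarrow> real" where
  "digit_value w d = (\<Sum>n. real (d n) * w n)"

definition digit_set :: "(nat \<Rightarrow> real) \<Rightarrow> nat \<Rightarrow> real set" where
  "digit_set w M = digit_value w ` digit_seqs M"

definition tail_sum :: "(nat \<Rightarrow> real) \<Rightarrow> nat \<Rightarrow> real" where
  "tail_sum w n = (\<Sum>k. w (k + n))"

lemma achievement_set_eq_digit_set: "achievement_set w = digit_set w 1"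
proof (intro set_eqI iffI)
  fix y assume "y \<in> achievement_set w"
  then obtain A where A: "y = (\<Sum>n. if n \<in> A then w n else 0)"
    unfolding achievement_set_def by blast
  show "y \<in> digit_set w 1"
    unfolding digit_set_def digit_value_def A
    by (rule image_eqI[where x = "\<lambda>n. if n \<in> A then 1 else 0"])
       (auto simp: digit_seqs_def intro: suminf_cong)
next
  fix y assume "y \<in> digit_set w 1"
  then obtain d where d: "d \<in> digit_seqs 1" "y = (\<Sum>n. real (d n) * w n)"
    unfolding digit_set_def digit_value_def by blast
  have "real (d n) * w n = (if n \<in> {k. d k = 1} then w n else 0)" for n
    using d(1) by (auto simp: digit_seqs_def le_Suc_eq dest: spec[of _ n])
  then have "y = (\<Sum>n. if n \<in> {k. d k = 1} then w n else 0)"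
    unfolding d(2) by (rule suminf_cong)
  then show "y \<in> achievement_set w"
    unfolding achievement_set_def by (intro CollectI exI)
qed

lemma ternary_cantor_set_eq_digit_set:
  "ternary_cantor_set = digit_set (\<lambda>n. 2 / 3 ^ Suc n) 1"
proof (intro set_eqI iffI)
  fix y assume "y \<in> ternary_cantor_set"
  then obtain d where d: "\<forall>n. d n \<in> {0, 2}" "y = (\<Sum>n. real (d n) / 3 ^ Suc n)"
    unfolding ternary_cantor_set_def by blast
  have "real (d n) / 3 ^ Suc n = real (d n div 2) * (2 / 3 ^ Suc n)" for n
    using d(1) by (cases "d n = 0") (auto dest: spec[of _ n])
  moreover have "d n div 2 \<le> 1" for n
    using d(1) by (cases "d n = 0") (auto dest: spec[of _ n])
  ultimately show "y \<in> digit_set (\<lambda>n. 2 / 3 ^ Suc n) 1"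
    unfolding digit_set_def digit_value_def d(2)
    by (intro image_eqI[where x = "\<lambda>n. d n div 2"]) (simp_all add: digit_seqs_def)
next
  fix y assume "y \<in> digit_set (\<lambda>n. 2 / 3 ^ Suc n) 1"
  then obtain d where d: "d \<in> digit_seqs 1" "y = (\<Sum>n. real (d n) * (2 / 3 ^ Suc n))"
    unfolding digit_set_def digit_value_def by blast
  have "\<forall>n. 2 * d n \<in> {0, 2}"
    using d(1) by (force simp: digit_seqs_def le_Suc_eq)
  moreover have "y = (\<Sum>n. real (2 * d n) / 3 ^ Suc n)"
    unfolding d(2) by (rule suminf_cong) simp
  ultimately show "y \<in> ternary_cantor_set"
    unfolding ternary_cantor_set_def by (intro CollectI exI conjI)
qed

lemma summable_digit_series:
  assumes "\<And>n. 0 \<le> w n" "summable w" "d \<in> digit_seqs M"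
  shows "summable (\<lambda>n. real (d n) * w n)"
proof (rule summable_comparison_test'[where g = "\<lambda>n. real M * w n"])
  show "summable (\<lambda>n. real M * w n)"
    using assms(2) by (rule summable_mult)
  show "norm (real (d n) * w n) \<le> real M * w n" for n
    using assms(1)[of n] assms(3) by (auto simp: digit_seqs_def intro: mult_right_mono)
qed

lemma digit_value_add:
  assumes "\<And>n. 0 \<le> w n" "summable w" "d \<in> digit_seqs M" "d' \<in> digit_seqs M'"
  shows "digit_value w d + digit_value w d' = digit_value w (\<lambda>n. d n + d' n)"
  using suminf_add[OF summable_digit_series[OF assms(1-3)] summable_digit_series[OF assms(1,2,4)]]
  by (simp add: digit_value_def distrib_right)

lemma set_sum_digit_set:
  assumes "\<And>n. 0 \<le> w n" "summable w"
  shows "set_sum (digit_set w M) (digit_set w M') = digit_set w (M + M')"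
proof (intro set_eqI iffI)
  fix y assume "y \<in> set_sum (digit_set w M) (digit_set w M')"
  then obtain d d' where d: "d \<in> digit_seqs M" "d' \<in> digit_seqs M'"
    and y: "y = digit_value w d + digit_value w d'"
    unfolding set_sum_def digit_set_def by blast
  have "(\<lambda>n. d n + d' n) \<in> digit_seqs (M + M')"
    using d by (auto simp: digit_seqs_def intro: add_mono)
  then show "y \<in> digit_set w (M + M')"
    unfolding y digit_value_add[OF assms d] digit_set_def by (rule imageI)
next
  fix y assume "y \<in> digit_set w (M + M')"
  then obtain c where c: "c \<in> digit_seqs (M + M')" and y: "y = digit_value w c"
    unfolding digit_set_def by blast
  define d where "d n = min (c n) M" for n
  define d' where "d' n = c n - d n" for n
  have "d n \<le> M" "d' n \<le> M'" for n
    using c by (auto simp: digit_seqs_def d_def d'_def dest!: spec[of _ n])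
  then have d: "d \<in> digit_seqs M" "d' \<in> digit_seqs M'"
    by (simp_all add: digit_seqs_def)
  have "c = (\<lambda>n. d n + d' n)"
    by (auto simp: d_def d'_def)
  then have "y = digit_value w d + digit_value w d'"
    unfolding y digit_value_add[OF assms d] by simp
  with d show "y \<in> set_sum (digit_set w M) (digit_set w M')"
    unfolding set_sum_def digit_set_def by blast
qed

lemma tail_sum_nonneg: "(\<And>n. 0 \<le> w n) \<Longrightarrow> summable w \<Longrightarrow> 0 \<le> tail_sum w n"
  unfolding tail_sum_def by (simp add: suminf_nonneg summable_ignore_initial_segment)

lemma tendsto_tail_sum: "summable w \<Longrightarrow> tail_sum w \<longlonglongrightarrow> 0"
proof -
  assume w: "summable w"
  then have "(\<lambda>n. suminf w - (\<Sum>k<n. w k)) \<longlonglongrightarrow> suminf w - suminf w"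
    by (intro tendsto_diff tendsto_const summable_LIMSEQ)
  then show ?thesis
    unfolding tail_sum_def suminf_minus_initial_segment[OF w] by simp
qed

lemma digit_value_diff_split:
  assumes w: "\<And>n. 0 \<le> w n" "summable w" and d: "d \<in> digit_seqs M" "d' \<in> digit_seqs M"
  obtains r where
    "digit_value w d - digit_value w d' = (\<Sum>k<N. (real (d k) - real (d' k)) * w k) + r"
    "\<bar>r\<bar> \<le> real M * tail_sum w N"
proof
  let ?D = "\<lambda>k. (real (d k) - real (d' k)) * w k"
  have sums: "summable (\<lambda>n. real (d n) * w n)" "summable (\<lambda>n. real (d' n) * w n)"
    using summable_digit_series w d by blast+
  then have "summable ?D"
    using summable_diff by (fastforce simp: left_diff_distrib)
  have "digit_value w d - digit_value w d' = suminf ?D"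
    unfolding digit_value_def using suminf_diff[OF sums] by (simp add: left_diff_distrib)
  also have "\<dots> = (\<Sum>k<N. ?D k) + (\<Sum>k. ?D (k + N))"
    using suminf_split_initial_segment[OF \<open>summable ?D\<close>, of N] by linarith
  finally show "digit_value w d - digit_value w d' = (\<Sum>k<N. ?D k) + (\<Sum>k. ?D (k + N))" .
  have "norm (?D (k + N)) \<le> real M * w (k + N)" for k
  proof -
    have "\<bar>real (d (k + N)) - real (d' (k + N))\<bar> \<le> real M"
      using d by (auto simp: digit_seqs_def dest!: spec[of _ "k + N"])
    then show ?thesis
      using w(1)[of "k + N"] by (simp add: abs_mult mult_right_mono)
  qed
  moreover have "summable (\<lambda>k. real M * w (k + N))"
    using w(2) by (intro summable_mult summable_ignore_initial_segment)
  ultimately have "norm (\<Sum>k. ?D (k + N)) \<le> (\<Sum>k. real M * w (k + N))"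
    by (rule norm_suminf_le)
  also have "\<dots> = real M * tail_sum w N"
    unfolding tail_sum_def using w(2) by (simp add: suminf_mult summable_ignore_initial_segment)
  finally show "\<bar>\<Sum>k. ?D (k + N)\<bar> \<le> real M * tail_sum w N"
    by simp
qed

lemma dist_digit_value_le_if_agree:
  assumes w: "\<And>n. 0 \<le> w n" "summable w" and d: "d \<in> digit_seqs M" "d' \<in> digit_seqs M"
    and agree: "\<forall>k<N. d k = d' k"
  shows "\<bar>digit_value w d - digit_value w d'\<bar> \<le> real M * tail_sum w N"
proof -
  obtain r where "digit_value w d - digit_value w d' = (\<Sum>k<N. (real (d k) - real (d' k)) * w k) + r"
    "\<bar>r\<bar> \<le> real M * tail_sum w N"
    using digit_value_diff_split[OF w d] .
  then show ?thesis
    using agree by simp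
qed

lemma dist_digit_value_ge_if_first_diff:
  assumes w: "\<And>n. 0 \<le> w n" "summable w" and d: "d \<in> digit_seqs M" "d' \<in> digit_seqs M"
    and agree: "\<forall>k<n. d k = d' k" and diff: "d n \<noteq> d' n"
  shows "w n - real M * tail_sum w (Suc n) \<le> \<bar>digit_value w d - digit_value w d'\<bar>"
proof -
  obtain r where r:
    "digit_value w d - digit_value w d' = (\<Sum>k<Suc n. (real (d k) - real (d' k)) * w k) + r"
    "\<bar>r\<bar> \<le> real M * tail_sum w (Suc n)"
    using digit_value_diff_split[OF w d] .
  have "(\<Sum>k<Suc n. (real (d k) - real (d' k)) * w k) = (real (d n) - real (d' n)) * w n"
    using agree by (simp add: sum.neutral)
  moreover have "1 \<le> \<bar>real (d n) - real (d' n)\<bar>"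
    using diff by linarith
  then have "w n \<le> \<bar>real (d n) - real (d' n)\<bar> * w n"
    using mult_right_mono[OF _ w(1)[of n]] by fastforce
  ultimately show ?thesis
    using r w(1)[of n] by (simp add: abs_mult)
qed

definition separated_weights :: "nat \<Rightarrow> (nat \<Rightarrow> real) \<Rightarrow> bool" where
  "separated_weights M w \<longleftrightarrow>
     (\<forall>n. 0 \<le> w n) \<and> summable w \<and> (\<forall>n. real M * tail_sum w (Suc n) < w n)"

lemma separated_weights_mono:
  assumes "separated_weights M' w" "M \<le> M'"
  shows "separated_weights M w"
proof -
  have "real M * tail_sum w (Suc n) \<le> real M' * tail_sum w (Suc n)" for n
    using assms tail_sum_nonneg[of w] by (intro mult_right_mono) (auto simp: separated_weights_def)
  then show ?thesis
    using assms(1) unfolding separated_weights_def by (meson le_less_trans)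
qed

lemma inj_on_digit_value:
  assumes "separated_weights M w"
  shows "inj_on (digit_value w) (digit_seqs M)"
proof (rule inj_onI, rule ccontr)
  have w: "\<And>n. 0 \<le> w n" "summable w"
    using assms by (simp_all add: separated_weights_def)
  fix d d' assume d: "d \<in> digit_seqs M" "d' \<in> digit_seqs M"
    and eq: "digit_value w d = digit_value w d'" and "d \<noteq> d'"
  then obtain n where n: "d n \<noteq> d' n" "\<forall>k<n. d k = d' k"
    using exists_least_iff[of "\<lambda>n. d n \<noteq> d' n"] by (auto simp: fun_eq_iff)
  have "w n - real M * tail_sum w (Suc n) \<le> 0"
    using dist_digit_value_ge_if_first_diff[OF w d n(2,1)] eq by simp
  with assms show False
    by (auto simp: separated_weights_def dest: spec[of _ n])
qed

section \<open>Topology of digit sequences\<close>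

lemma open_prefix_cylinder: "open {f :: nat \<Rightarrow> 'a::discrete_topology. \<forall>k<N. f k = c k}"
proof -
  have "{f :: nat \<Rightarrow> 'a. \<forall>k<N. f k = c k} = {f. \<forall>k\<in>{..<N}. f (id k) \<in> {c k}}"
    by auto
  then show ?thesis
    using product_topology_basis'[of "{..<N}" "\<lambda>k. {c k}" id] by (simp add: open_discrete)
qed

lemma continuous_on_if_prefix_determined:
  fixes f :: "(nat \<Rightarrow> 'a::discrete_topology) \<Rightarrow> 'b::metric_space"
  assumes "\<And>e. 0 < e \<Longrightarrow> \<exists>N. \<forall>d\<in>S. \<forall>d'\<in>S. (\<forall>k<N. d k = d' k) \<longrightarrow> dist (f d) (f d') < e"
  shows "continuous_on S f"
  unfolding continuous_on_topological
proof (intro ballI allI impI)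
  fix d B assume "d \<in> S" "open B" "f d \<in> B"
  obtain e where "0 < e" "ball (f d) e \<subseteq> B"
    using \<open>open B\<close> \<open>f d \<in> B\<close> by (rule openE)
  obtain N where "\<forall>d\<in>S. \<forall>d'\<in>S. (\<forall>k<N. d k = d' k) \<longrightarrow> dist (f d) (f d') < e"
    using assms[OF \<open>0 < e\<close>] ..
  then have N: "\<forall>d'\<in>S. (\<forall>k<N. d k = d' k) \<longrightarrow> dist (f d) (f d') < e"
    using \<open>d \<in> S\<close> ..
  show "\<exists>A. open A \<and> d \<in> A \<and> (\<forall>y\<in>S. y \<in> A \<longrightarrow> f y \<in> B)"
  proof (intro exI conjI)
    show "open {g. \<forall>k<N. g k = d k}"
      by (rule open_prefix_cylinder)
    show "\<forall>y\<in>S. y \<in> {g. \<forall>k<N. g k = d k} \<longrightarrow> f y \<in> B"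
    proof (intro ballI impI)
      fix y assume "y \<in> S" "y \<in> {g. \<forall>k<N. g k = d k}"
      then have "f y \<in> ball (f d) e"
        using N by simp
      then show "f y \<in> B"
        using \<open>ball (f d) e \<subseteq> B\<close> by blast
    qed
  qed simp
qed

lemma compact_digit_seqs: "compact (digit_seqs M)"
proof -
  have eq: "digit_seqs M = Pi\<^sub>E UNIV (\<lambda>_. {..M})"
    by (auto simp: digit_seqs_def PiE_UNIV_domain)
  have "compactin (product_topology (\<lambda>_. euclidean) UNIV) (Pi\<^sub>E UNIV (\<lambda>_. {..M::nat}))"
    by (intro compactin_PiE[THEN iffD2] disjI2 ballI) (simp add: finite_imp_compact)
  then show ?thesis
    unfolding eq euclidean_product_topology compactin_euclidean_iff .
qed

lemma digit_value_close_if_agree: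
  assumes w: "\<And>n. 0 \<le> w n" "summable w" and "0 < e"
  obtains N where "\<And>d d'. d \<in> digit_seqs M \<Longrightarrow> d' \<in> digit_seqs M \<Longrightarrow> \<forall>k<N. d k = d' k \<Longrightarrow>
                     dist (digit_value w d) (digit_value w d') < e"
proof -
  have "(\<lambda>N. real M * tail_sum w N) \<longlonglongrightarrow> 0"
    using tendsto_mult_right_zero[OF tendsto_tail_sum[OF w(2)]] .
  then have "eventually (\<lambda>N. real M * tail_sum w N < e) sequentially"
    using \<open>0 < e\<close> by (rule order_tendstoD(2))
  then obtain N where N: "real M * tail_sum w N < e"
    unfolding eventually_sequentially by blast
  show thesis
  proof
    fix d d' assume "d \<in> digit_seqs M" "d' \<in> digit_seqs M" "\<forall>k<N. d k = d' k"
    from dist_digit_value_le_if_agree[OF w this] N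
    show "dist (digit_value w d) (digit_value w d') < e"
      by (simp add: dist_real_def)
  qed
qed

lemma continuous_on_digit_value:
  assumes "\<And>n. 0 \<le> w n" "summable w"
  shows "continuous_on (digit_seqs M) (digit_value w)"
proof (rule continuous_on_if_prefix_determined)
  fix e :: real assume "0 < e"
  obtain N where "\<And>d d'. d \<in> digit_seqs M \<Longrightarrow> d' \<in> digit_seqs M \<Longrightarrow>
      \<forall>k<N. d k = d' k \<Longrightarrow> dist (digit_value w d) (digit_value w d') < e"
    using digit_value_close_if_agree[OF assms \<open>0 < e\<close>, where M = M] by blast
  then show "\<exists>N. \<forall>d\<in>digit_seqs M. \<forall>d'\<in>digit_seqs M.
               (\<forall>k<N. d k = d' k) \<longrightarrow> dist (digit_value w d) (digit_value w d') < e"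
    by blast
qed

lemma digit_set_homeomorphic_digit_seqs:
  assumes "separated_weights M w"
  shows "digit_set w M homeomorphic digit_seqs M"
proof -
  have w: "\<And>n. 0 \<le> w n" "summable w"
    using assms by (simp_all add: separated_weights_def)
  have "digit_seqs M homeomorphic digit_set w M"
    using compact_digit_seqs continuous_on_digit_value[OF w] _ inj_on_digit_value[OF assms]
    by (rule homeomorphic_compact) (simp add: digit_set_def)
  then show ?thesis
    by (rule homeomorphic_sym[THEN iffD1])
qed

section \<open>A prefix code from three digits to two\<close>

(* The prefix code 0 \<mapsto> 0, 1 \<mapsto> 10, 2 \<mapsto> 11. For binary b, block_start b i is the position where
   the i-th code word starts. For ternary c, code_position c m = (i, j) means that bit m of the
   encoding of c is bit j of the code word of c i. *)
primrec block_start :: "(nat \<Rightarrow> nat) \<Rightarrow> nat \<Rightarrow> nat" where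
  "block_start b 0 = 0"
| "block_start b (Suc i) = block_start b i + (if b (block_start b i) = 0 then 1 else 2)"

definition prefix_decode :: "(nat \<Rightarrow> nat) \<Rightarrow> nat \<Rightarrow> nat" where
  "prefix_decode b i =
     (if b (block_start b i) = 0 then 0 else if b (Suc (block_start b i)) = 0 then 1 else 2)"

primrec code_position :: "(nat \<Rightarrow> nat) \<Rightarrow> nat \<Rightarrow> nat \<times> nat" where
  "code_position c 0 = (0, 0)"
| "code_position c (Suc m) =
     (if c (fst (code_position c m)) = 0 \<or> snd (code_position c m) = 1
      then (Suc (fst (code_position c m)), 0) else (fst (code_position c m), 1))"

definition prefix_encode :: "(nat \<Rightarrow> nat) \<Rightarrow> nat \<Rightarrow> nat" where
  "prefix_encode c m =
     (if snd (code_position c m) = 0 then (if c (fst (code_position c m)) = 0 then 0 else 1)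
      else (if c (fst (code_position c m)) = 1 then 0 else 1))"

lemma prefix_decode_in_digit_seqs: "prefix_decode b \<in> digit_seqs 2"
  by (simp add: digit_seqs_def prefix_decode_def)

lemma prefix_encode_in_digit_seqs: "prefix_encode c \<in> digit_seqs 1"
  by (simp add: digit_seqs_def prefix_encode_def)

lemma block_start_covers:
  "\<exists>i. block_start b i = m \<or> (Suc (block_start b i) = m \<and> b (block_start b i) \<noteq> 0)"
proof (induction m)
  case 0
  show ?case
    by (rule exI[of _ 0]) simp
next
  case (Suc m)
  then obtain i where "block_start b i = m \<or> (Suc (block_start b i) = m \<and> b (block_start b i) \<noteq> 0)"
    by blast
  then show ?case
    by (cases "b (block_start b i) = 0") (auto intro: exI[of _ i] exI[of _ "Suc i"])
qed

lemma prefix_decode_eq_0_iff: "prefix_decode b i = 0 \<longleftrightarrow> b (block_start b i) = 0"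
  by (simp add: prefix_decode_def)

lemma code_position_prefix_decode:
  "code_position (prefix_decode b) (block_start b i) = (i, 0) \<and>
   (b (block_start b i) \<noteq> 0 \<longrightarrow> code_position (prefix_decode b) (Suc (block_start b i)) = (i, 1))"
proof (induction i)
  case 0
  show ?case
    by (simp add: prefix_decode_def)
next
  case (Suc i)
  have "code_position (prefix_decode b) (block_start b (Suc i)) = (Suc i, 0)"
  proof (cases "b (block_start b i) = 0")
    case True
    with Suc.IH show ?thesis
      by (simp add: prefix_decode_eq_0_iff)
  next
    case False
    then have "code_position (prefix_decode b) (Suc (block_start b i)) = (i, 1)"
      using Suc.IH by blast
    with False show ?thesis
      by simp
  qed
  then show ?case
    by (simp add: prefix_decode_eq_0_iff del: block_start.simps)
qed

lemma prefix_encode_decode: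
  assumes "b \<in> digit_seqs 1"
  shows "prefix_encode (prefix_decode b) = b"
proof
  fix m
  have bit: "b k = 0 \<or> b k = 1" for k
    using assms by (auto simp: digit_seqs_def le_Suc_eq dest: spec[of _ k])
  obtain i where "block_start b i = m \<or> (Suc (block_start b i) = m \<and> b (block_start b i) \<noteq> 0)"
    using block_start_covers by blast
  then show "prefix_encode (prefix_decode b) m = b m"
    using code_position_prefix_decode[of b i] bit[of m]
    by (auto simp: prefix_encode_def prefix_decode_def)
qed

lemma code_position_block_start: "code_position c (block_start (prefix_encode c) i) = (i, 0)"
  by (induction i) (auto simp: prefix_encode_def numeral_2_eq_2)

lemma prefix_decode_encode:
  assumes "c \<in> digit_seqs 2"
  shows "prefix_decode (prefix_encode c) = c"
proof
  fix i
  have "c i = 0 \<or> c i = 1 \<or> c i = 2"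
    using assms by (auto simp: digit_seqs_def dest!: spec[of _ i])
  moreover have "code_position c (block_start (prefix_encode c) i) = (i, 0)"
    by (rule code_position_block_start)
  ultimately show "prefix_decode (prefix_encode c) i = c i"
    by (auto simp: prefix_decode_def prefix_encode_def)
qed

lemma fst_code_position_le: "fst (code_position c m) \<le> m"
  by (induction m) auto

lemma code_position_cong:
  assumes "\<forall>k<N. c k = c' k" "m \<le> N"
  shows "code_position c m = code_position c' m"
  using assms(2)
proof (induction m)
  case (Suc m)
  moreover have "fst (code_position c m) < N"
    using fst_code_position_le[of c m] Suc.prems by linarith
  ultimately show ?case
    using assms(1) by simp
qed simp

lemma prefix_encode_agree:
  assumes "\<forall>k<N. c k = c' k" "m < N"
  shows "prefix_encode c m = prefix_encode c' m"
proof -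
  have "code_position c m = code_position c' m"
    using assms by (intro code_position_cong) auto
  moreover have "fst (code_position c m) < N"
    using fst_code_position_le[of c m] assms(2) by linarith
  ultimately show ?thesis
    using assms(1) by (simp add: prefix_encode_def)
qed

lemma image_prefix_encode: "prefix_encode ` digit_seqs 2 = digit_seqs 1"
  using prefix_encode_in_digit_seqs prefix_decode_in_digit_seqs prefix_encode_decode
  by (metis image_eqI image_subsetI subsetI subset_antisym)

lemma inj_on_prefix_encode: "inj_on prefix_encode (digit_seqs 2)"
  by (metis inj_onI prefix_decode_encode)

(* The library has no t2_space instance for nat \<Rightarrow> nat, so the compactness argument is run with
   target \<real>, after composing the encoding with digit_value. *)
lemma digit_seqs_2_homeomorphic_digit_set:
  assumes "separated_weights 1 w"
  shows "digit_seqs 2 homeomorphic digit_set w 1"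
proof (rule homeomorphic_compact[OF compact_digit_seqs])
  have w: "\<And>n. 0 \<le> w n" "summable w"
    using assms by (simp_all add: separated_weights_def)
  show "continuous_on (digit_seqs 2) (digit_value w \<circ> prefix_encode)"
  proof (rule continuous_on_if_prefix_determined)
    fix e :: real assume "0 < e"
    obtain N where N: "\<And>d d'. d \<in> digit_seqs 1 \<Longrightarrow> d' \<in> digit_seqs 1 \<Longrightarrow>
        \<forall>k<N. d k = d' k \<Longrightarrow> dist (digit_value w d) (digit_value w d') < e"
      using digit_value_close_if_agree[OF w \<open>0 < e\<close>, where M = 1] by blast
    show "\<exists>N. \<forall>c\<in>digit_seqs 2. \<forall>c'\<in>digit_seqs 2. (\<forall>k<N. c k = c' k) \<longrightarrow>
            dist ((digit_value w \<circ> prefix_encode) c) ((digit_value w \<circ> prefix_encode) c') < e"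
      using N prefix_encode_in_digit_seqs prefix_encode_agree by (metis comp_apply)
  qed
  show "(digit_value w \<circ> prefix_encode) ` digit_seqs 2 = digit_set w 1"
    unfolding image_comp[symmetric] image_prefix_encode digit_set_def ..
  show "inj_on (digit_value w \<circ> prefix_encode) (digit_seqs 2)"
    using inj_on_digit_value[OF assms] inj_on_prefix_encode
    by (simp add: comp_inj_on image_prefix_encode)
qed

section \<open>Hausdorff dimension of digit sets\<close>

(* Boundedness is needed because the diameter of an unbounded set is an unspecified real. *)
lemma hausdorff_pre_le_finite_cover:
  assumes "finite F" "S \<subseteq> (\<Union>i\<in>F. U i)"
    and "\<And>i. i \<in> F \<Longrightarrow> bounded (U i)" "\<And>i. i \<in> F \<Longrightarrow> diameter (U i) \<le> r"
    and "0 \<le> r" "r \<le> \<delta>" "0 \<le> s"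
  shows "hausdorff_pre s \<delta> S \<le> of_nat (card F) * ennreal (r powr s)"
proof -
  obtain h where h: "bij_betw h {..<card F} F"
    using ex_bij_betw_nat_finite[OF assms(1)] by (auto simp: atLeast0LessThan)
  define V where "V j = (if j < card F then U (h j) else {})" for j
  have "S \<subseteq> (\<Union>j. V j)"
  proof
    fix x assume "x \<in> S"
    then obtain i where "i \<in> F" "x \<in> U i"
      using assms(2) by blast
    moreover obtain j where "j < card F" "h j = i"
      using h \<open>i \<in> F\<close> by (metis bij_betw_iff_bijections lessThan_iff)
    ultimately show "x \<in> (\<Union>j. V j)"
      by (auto simp: V_def)
  qed
  moreover have diam: "0 \<le> diameter (V j) \<and> diameter (V j) \<le> r" for j
    using assms(3-5) bij_betwE[OF h] by (auto simp: V_def diameter_ge_0)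
  ultimately have "hausdorff_pre s \<delta> S \<le> (\<Sum>j. ennreal (diameter (V j) powr s))"
    unfolding hausdorff_pre_def using assms(6) by (intro INF_lower) (auto intro: order_trans)
  also have "\<dots> = (\<Sum>j<card F. ennreal (diameter (V j) powr s))"
    by (rule suminf_finite) (auto simp: V_def)
  also have "\<dots> \<le> (\<Sum>j<card F. ennreal (r powr s))"
    using diam assms(7) by (intro sum_mono ennreal_leI powr_mono2) auto
  also have "\<dots> = of_nat (card F) * ennreal (r powr s)"
    by simp
  finally show ?thesis .
qed

lemma bounded_digit_set:
  assumes w: "\<And>n. 0 \<le> w n" "summable w"
  shows "bounded (digit_set w M)"
  unfolding bounded_iff
proof (intro exI ballI)
  fix y assume "y \<in> digit_set w M"
  then obtain d where "d \<in> digit_seqs M" "y = digit_value w d"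
    unfolding digit_set_def by blast
  moreover have "(\<lambda>_. 0) \<in> digit_seqs M" "digit_value w (\<lambda>_. 0) = 0"
    by (simp_all add: digit_seqs_def digit_value_def)
  ultimately show "norm y \<le> real M * tail_sum w 0"
    using dist_digit_value_le_if_agree[OF w, of d M "\<lambda>_. 0" 0] by simp
qed

lemma hausdorff_pre_digit_set_le:
  assumes w: "\<And>n. 0 \<le> w n" "summable w"
    and "real M * tail_sum w N \<le> \<delta>" "0 \<le> s"
  shows "hausdorff_pre s \<delta> (digit_set w M)
           \<le> of_nat ((M + 1) ^ N) * ennreal ((real M * tail_sum w N) powr s)"
proof -
  define F where "F = Pi\<^sub>E {..<N} (\<lambda>_. {..M})"
  define U where "U p = digit_value w ` {d \<in> digit_seqs M. \<forall>k<N. d k = p k}" for p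
  have "finite F"
    unfolding F_def by (intro finite_PiE) auto
  have "card F = (M + 1) ^ N"
    unfolding F_def by (simp add: card_PiE)
  moreover have "digit_set w M \<subseteq> (\<Union>p\<in>F. U p)"
  proof
    fix y assume "y \<in> digit_set w M"
    then obtain d where d: "d \<in> digit_seqs M" "y = digit_value w d"
      unfolding digit_set_def by blast
    then have "restrict d {..<N} \<in> F"
      unfolding F_def digit_seqs_def by auto
    moreover have "y \<in> U (restrict d {..<N})"
      unfolding U_def using d by auto
    ultimately show "y \<in> (\<Union>p\<in>F. U p)"
      by blast
  qed
  moreover have "bounded (U p)" for p
    using bounded_digit_set[OF w] by (rule bounded_subset) (auto simp: U_def digit_set_def)
  moreover have "diameter (U p) \<le> real M * tail_sum w N" for p
  proof (rule diameter_le)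
    show "U p \<noteq> {} \<or> 0 \<le> real M * tail_sum w N"
      using tail_sum_nonneg[OF w] by simp
    fix a b assume "a \<in> U p" "b \<in> U p"
    then obtain d d' where "d \<in> digit_seqs M" "d' \<in> digit_seqs M" "\<forall>k<N. d k = p k"
      "\<forall>k<N. d' k = p k" "a = digit_value w d" "b = digit_value w d'"
      unfolding U_def by blast
    then show "norm (a - b) \<le> real M * tail_sum w N"
      using dist_digit_value_le_if_agree[OF w, of d M d' N] by simp
  qed
  ultimately show ?thesis
    using hausdorff_pre_le_finite_cover[OF \<open>finite F\<close>, of "digit_set w M" U
        "real M * tail_sum w N" \<delta> s] tail_sum_nonneg[OF w, of N] assms(3,4)
    by simp
qed

lemma hausdorff_measure_eq_0_if_pre_small:
  assumes "\<And>\<delta> e. 0 < \<delta> \<Longrightarrow> 0 < e \<Longrightarrow> hausdorff_pre s \<delta> A \<le> ennreal e"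
  shows "hausdorff_measure s A = 0"
proof -
  have "hausdorff_pre s \<delta> A \<le> 0" if "0 < \<delta>" for \<delta>
    by (rule ennreal_le_epsilon) (simp add: assms that)
  then have "hausdorff_measure s A \<le> 0"
    unfolding hausdorff_measure_def by (intro SUP_least) simp
  then show ?thesis
    by simp
qed

lemma hausdorff_dim_eq_0_if_measure_0:
  assumes "\<And>s. 0 < s \<Longrightarrow> hausdorff_measure s A = 0"
  shows "hausdorff_dim A = 0"
  unfolding hausdorff_dim_def
proof (rule antisym)
  show "(INF s\<in>{s. 0 \<le> s \<and> hausdorff_measure s A = 0}. ereal s) \<le> 0"
  proof (rule ereal_le_epsilon2)
    fix e :: real assume "0 < e"
    then have "(INF s\<in>{s. 0 \<le> s \<and> hausdorff_measure s A = 0}. ereal s) \<le> ereal e"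
      using assms by (intro INF_lower) auto
    then show "(INF s\<in>{s. 0 \<le> s \<and> hausdorff_measure s A = 0}. ereal s) \<le> 0 + ereal e"
      by simp
  qed
qed (rule INF_greatest, simp)

lemma hausdorff_dim_digit_set_eq_0:
  assumes w: "\<And>n. 0 \<le> w n" "summable w"
    and bound: "\<And>N. real M * tail_sum w N \<le> r N" and "r \<longlonglongrightarrow> 0"
    and count: "\<And>s. 0 < s \<Longrightarrow> (\<lambda>N. real (M + 1) ^ N * r N powr s) \<longlonglongrightarrow> 0"
  shows "hausdorff_dim (digit_set w M) = 0"
proof (intro hausdorff_dim_eq_0_if_measure_0 hausdorff_measure_eq_0_if_pre_small)
  fix s \<delta> e :: real assume "0 < s" "0 < \<delta>" "0 < e"
  have "eventually (\<lambda>N. r N < \<delta> \<and> real (M + 1) ^ N * r N powr s < e) sequentially"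
    using order_tendstoD(2)[OF \<open>r \<longlonglongrightarrow> 0\<close> \<open>0 < \<delta>\<close>] order_tendstoD(2)[OF count \<open>0 < e\<close>]
      \<open>0 < s\<close> by (intro eventually_conj)
  then obtain N where N: "r N < \<delta>" "real (M + 1) ^ N * r N powr s < e"
    unfolding eventually_sequentially by blast
  have tail: "0 \<le> real M * tail_sum w N"
    using tail_sum_nonneg[OF w] by simp
  have "hausdorff_pre s \<delta> (digit_set w M)
          \<le> of_nat ((M + 1) ^ N) * ennreal ((real M * tail_sum w N) powr s)"
    using bound[of N] N(1) \<open>0 < s\<close> by (intro hausdorff_pre_digit_set_le[OF w]) auto
  also have "\<dots> = ennreal (real (M + 1) ^ N * (real M * tail_sum w N) powr s)"
    by (simp add: ennreal_of_nat_eq_real_of_nat ennreal_mult')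
  also have "\<dots> \<le> ennreal (real (M + 1) ^ N * r N powr s)"
    using bound[of N] tail \<open>0 < s\<close>
    by (intro ennreal_leI mult_left_mono powr_mono2) auto
  also have "\<dots> \<le> ennreal e"
    using N(2) by (intro ennreal_leI) simp
  finally show "hausdorff_pre s \<delta> (digit_set w M) \<le> ennreal e" .
qed

section \<open>Cantor sets and the example\<close>

lemma separated_weights_ternary: "separated_weights 1 (\<lambda>n. 2 / 3 ^ Suc n)"
proof -
  have "(\<lambda>k. 2 / 3 ^ Suc (k + m) :: real) sums (1 / 3 ^ m)" for m
  proof -
    have "(\<lambda>k. 2 / 3 ^ Suc m * (1 / 3) ^ k) sums (2 / 3 ^ Suc m * (1 / (1 - 1 / 3 :: real)))"
      by (intro sums_mult geometric_sums) simp
    moreover have "2 / 3 ^ Suc m * (1 / 3) ^ k = (2 / 3 ^ Suc (k + m) :: real)" for k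
      by (simp add: power_add power_divide)
    ultimately show ?thesis
      by simp
  qed
  then have "tail_sum (\<lambda>n. 2 / 3 ^ Suc n) m = 1 / 3 ^ m" for m
    by (simp add: tail_sum_def sums_iff)
  moreover have "summable (\<lambda>n. 2 / 3 ^ Suc n :: real)"
    using sums_summable[OF \<open>\<And>m. _ sums (1 / 3 ^ m)\<close>[of 0]] by simp
  ultimately show ?thesis
    by (simp add: separated_weights_def divide_strict_right_mono)
qed

lemma is_cantor_set_digit_set_1:
  assumes "separated_weights 1 w"
  shows "is_cantor_set (digit_set w 1)"
  unfolding is_cantor_set_def ternary_cantor_set_eq_digit_set
  using homeomorphic_trans[OF digit_set_homeomorphic_digit_seqs[OF assms]
      digit_set_homeomorphic_digit_seqs[OF separated_weights_ternary, THEN homeomorphic_sym[THEN iffD1]]] .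

lemma is_cantor_set_digit_set_2:
  assumes "separated_weights 2 w"
  shows "is_cantor_set (digit_set w 2)"
  unfolding is_cantor_set_def ternary_cantor_set_eq_digit_set
  using homeomorphic_trans[OF digit_set_homeomorphic_digit_seqs[OF assms]
      digit_seqs_2_homeomorphic_digit_set[OF separated_weights_ternary]] .

definition inv_four_pow_sq :: "nat \<Rightarrow> real" where
  "inv_four_pow_sq n = (1 / 4) ^ (n * n)"

lemma inv_four_pow_sq_shift_le: "inv_four_pow_sq (k + N) \<le> (1 / 4) ^ (N * N) * (1 / 4) ^ k"
proof -
  have "N * N + k \<le> (k + N) * (k + N)"
    by (simp add: algebra_simps) (intro trans_le_add2 le_square)
  then have "(1 / 4 :: real) ^ ((k + N) * (k + N)) \<le> (1 / 4) ^ (N * N + k)"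
    by (intro power_decreasing) auto
  then show ?thesis
    by (simp add: inv_four_pow_sq_def power_add)
qed

lemma summable_inv_four_pow_sq: "summable inv_four_pow_sq"
proof (rule summable_comparison_test'[where g = "\<lambda>k. (1 / 4 :: real) ^ k"])
  show "summable (\<lambda>k. (1 / 4 :: real) ^ k)"
    by (rule summable_geometric) simp
  show "norm (inv_four_pow_sq n) \<le> (1 / 4) ^ n" for n
    using inv_four_pow_sq_shift_le[of n 0] by (simp add: inv_four_pow_sq_def)
qed

lemma tail_sum_inv_four_pow_sq_le: "tail_sum inv_four_pow_sq N \<le> 4 / 3 * (1 / 4) ^ (N * N)"
proof -
  have "tail_sum inv_four_pow_sq N \<le> (\<Sum>k. (1 / 4 :: real) ^ (N * N) * (1 / 4) ^ k)"
    unfolding tail_sum_def using summable_inv_four_pow_sq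
    by (intro suminf_le inv_four_pow_sq_shift_le summable_mult summable_geometric
        summable_ignore_initial_segment) auto
  also have "\<dots> = 4 / 3 * (1 / 4) ^ (N * N)"
    by (simp add: suminf_mult suminf_geometric)
  finally show ?thesis .
qed

lemma separated_weights_inv_four_pow_sq: "separated_weights 2 inv_four_pow_sq"
  unfolding separated_weights_def
proof (intro conjI allI)
  fix n
  have "Suc n * Suc n = n * n + (2 * n + 1)"
    by simp
  then have "(1 / 4 :: real) ^ (Suc n * Suc n) = (1 / 4) ^ (n * n) * (1 / 4) ^ (2 * n + 1)"
    by (simp only: power_add)
  also have "\<dots> \<le> (1 / 4) ^ (n * n) * (1 / 4)"
    by (intro mult_left_mono) (auto simp: power_le_one)
  finally have "real 2 * tail_sum inv_four_pow_sq (Suc n)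
                  \<le> 2 * 4 / 3 * ((1 / 4) ^ (n * n) * (1 / 4))"
    using tail_sum_inv_four_pow_sq_le[of "Suc n"] by linarith
  also have "\<dots> < inv_four_pow_sq n"
    by (simp add: inv_four_pow_sq_def)
  finally show "real 2 * tail_sum inv_four_pow_sq (Suc n) < inv_four_pow_sq n" .
qed (simp_all add: inv_four_pow_sq_def summable_inv_four_pow_sq)

lemma hausdorff_dim_digit_set_inv_four_pow_sq: "hausdorff_dim (digit_set inv_four_pow_sq 1) = 0"
proof (rule hausdorff_dim_digit_set_eq_0)
  show "0 \<le> inv_four_pow_sq n" for n
    by (simp add: inv_four_pow_sq_def)
  show "summable inv_four_pow_sq"
    by (rule summable_inv_four_pow_sq)
  show "real 1 * tail_sum inv_four_pow_sq N \<le> 4 / 3 * (1 / 4) ^ (N * N)" for N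
    using tail_sum_inv_four_pow_sq_le by simp
  show "(\<lambda>N. 4 / 3 * (1 / 4 :: real) ^ (N * N)) \<longlonglongrightarrow> 0"
    by real_asymp
  show "(\<lambda>N. real (1 + 1) ^ N * (4 / 3 * (1 / 4) ^ (N * N)) powr s) \<longlonglongrightarrow> 0" if "0 < s" for s
    using that by simp real_asymp
qed

theorem mainTheorem2:
  shows "\<exists>x :: nat \<Rightarrow> real. (\<forall>n. x n > 0) \<and> summable x \<and>
           is_cantor_set (achievement_set x) \<and>
           hausdorff_dim (achievement_set x) = 0 \<and>
           is_cantor_set (set_sum (achievement_set x) (achievement_set x))"
proof (intro exI[of _ inv_four_pow_sq] conjI allI)
  have nonneg: "\<And>n. 0 \<le> inv_four_pow_sq n"
    by (simp add: inv_four_pow_sq_def)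
  show "0 < inv_four_pow_sq n" for n
    by (simp add: inv_four_pow_sq_def)
  show "summable inv_four_pow_sq"
    by (rule summable_inv_four_pow_sq)
  show "is_cantor_set (achievement_set inv_four_pow_sq)"
    unfolding achievement_set_eq_digit_set
    by (rule is_cantor_set_digit_set_1[OF separated_weights_mono[OF separated_weights_inv_four_pow_sq]])
       simp
  show "hausdorff_dim (achievement_set inv_four_pow_sq) = 0"
    unfolding achievement_set_eq_digit_set by (rule hausdorff_dim_digit_set_inv_four_pow_sq)
  show "is_cantor_set (set_sum (achievement_set inv_four_pow_sq) (achievement_set inv_four_pow_sq))"
    unfolding achievement_set_eq_digit_set set_sum_digit_set[OF nonneg summable_inv_four_pow_sq]
      one_add_one
    by (rule is_cantor_set_digit_set_2[OF separated_weights_inv_four_pow_sq])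
qed

end
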